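(* Consider the Markov-chain trace semantics of an APPL program $\langle\mathcal{D},S_{\mathsf{main}}\rangle$ with stopping time $T$, fix $m\in\mathbb{N}$, and let $\psi:\Sigma\to\mathcal{M}_{\mathcal{R}}^{(m)}$ be an expected-potential function for upper bounds on stopping time, where $\mathcal{R}=([0,\infty],\le,+,\cdot,0,1)$. Let $A_n(\omega)=\langle n^k\rangle_{0\le k\le m}$, $A_T(\omega)=A_{T(\omega)}(\omega)=\langle T(\omega)^k\rangle_{0\le k\le m}$ and $\Psi_0(\omega)=\psi(\omega_0)$. Then $\mathbb{E}[A_T]\sqsubseteq\mathbb{E}[\Psi_0]$.
   Context: APPL: fix finite sets $\mathsf{VID}$ (real-valued program variables) and $\mathsf{FID}$. Expressions $E::=x\mid c\mid E_1+E_2\mid E_1*E_2$; conditions $L::=\mathsf{true}\mid\neg L\mid L_1\wedge L_2\mid E_1\le E_2$; distributions $D$ with probability measures $\mu_D$ on $\mathbb{R}$; statements $S::=\mathsf{skip}\mid\mathsf{tick}(c)\mid x:=E\mid x\sim D\mid\mathsf{call}\ f\mid\mathsf{while}\ L\ \mathsf{do}\ S\mid\mathsf{if}\ \mathsf{prob}(p)\ \mathsf{then}\ S_1\ \mathsf{else}\ S_2\mid\mathsf{if}\ L\ \mathsf{then}\ S_1\ \mathsf{else}\ S_2\mid S_1;S_2$; program $\langle\mathcal{D},S_{\mathsf{main}}\rangle$ with $\mathcal{D}:\mathsf{FID}\to$ statements. Continuations $K::=\mathsf{Kstop}\mid\mathsf{Kloop}(L,S,K)\mid\mathsf{Kseq}(S,K)$.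 Configurations $\sigma=\langle\gamma,S,K,\alpha\rangle$, $\gamma:\mathsf{VID}\to\mathbb{R}$, $\alpha\in\mathbb{R}$; $\Sigma$ the measurable space of configurations. One-step kernel $\mapsto$: $\langle\gamma,\mathsf{skip},\mathsf{Kstop},\alpha\rangle\mapsto\delta(\text{itself})$; $\langle\gamma,\mathsf{skip},\mathsf{Kloop}(L,S,K),\alpha\rangle\mapsto\delta(\langle\gamma,S,\mathsf{Kloop}(L,S,K),\alpha\rangle)$ if $\gamma(L)$ true else $\delta(\langle\gamma,\mathsf{skip},K,\alpha\rangle)$; $\langle\gamma,\mathsf{skip},\mathsf{Kseq}(S,K),\alpha\rangle\mapsto\delta(\langle\gamma,S,K,\alpha\rangle)$; $\mathsf{tick}(c)$: $\delta(\langle\gamma,\mathsf{skip},K,\alpha+c\rangle)$; $x:=E$: $\delta(\langle\gamma[x\mapsto\gamma(E)],\mathsf{skip},K,\alpha\rangle)$; $x\sim D$: law of $\langle\gamma[x\mapsto r],\mathsf{skip},K,\alpha\rangle$, $r\sim\mu_D$; $\mathsf{call}\ f$: $\delta(\langle\gamma,\mathcal{D}(f),K,\alpha\rangle)$; probabilistic branch: $p\,\delta(\langle\gamma,S_1,K,\alpha\rangle)+(1-p)\,\delta(\langle\gamma,S_2,K,\alpha\rangle)$; conditional according to $\gamma(L)$; $\mathsf{while}\ L\ \mathsf{do}\ S$: $\delta(\langle\gamma,\mathsf{skip},\mathsf{Kloop}(L,S,K),\alpha\rangle)$; $S_1;S_2$: $\delta(\langle\gamma,S_1,\mathsf{Kseq}(S_2,K),\alpha\rangle)$.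 $\Omega=\Sigma^{\mathbb{Z}_{\ge0}}$ with $\mathbb{P}$ the law of the Markov chain started at $\langle\lambda\_.0,S_{\mathsf{main}},\mathsf{Kstop},0\rangle$ with kernel $\mapsto$; $T(\omega)=\inf\{n:\omega_n=\langle\_,\mathsf{skip},\mathsf{Kstop},\_\rangle\}\in\mathbb{Z}_{\ge0}\cup\{\infty\}$. $\mathcal{M}_{\mathcal{R}}^{(m)}$ is the set of vectors $\langle u_k\rangle_{0\le k\le m}$ over $[0,\infty]$ with pointwise $\oplus$, $\langle u_k\rangle\otimes\langle v_k\rangle=\langle\sum_{i=0}^k\binom{k}{i}u_iv_{k-i}\rangle_{0\le k\le m}$, $\underline{1}=\langle1,0,\dots,0\rangle$, and pointwise order $\sqsubseteq$; expectations are componentwise. A (measurable) map $\psi:\Sigma\to\mathcal{M}_{\mathcal{R}}^{(m)}$ is an expected-potential function for upper bounds on stopping time if (i) $\psi(\sigma)_0=1$ for all $\sigma$, (ii) $\psi(\sigma)=\underline{1}$ if $\sigma=\langle\_,\mathsf{skip},\mathsf{Kstop},\_\rangle$, and (iii) $\psi(\sigma)\sqsupseteq\mathbb{E}_{\sigma'\sim{\mapsto}(\sigma)}[\langle1,1,\dots,1\rangle\otimes\psi(\sigma')]$ for every non-terminating configuration $\sigma$. *)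

theory Defs
  imports "HOL-Probability.Probability"
begin

typedef dist = "{M :: real measure. prob_space M \<and> sets M = sets borel}"
  by (intro exI[of _ "return borel 0"]) (auto simp: prob_space_return)

typedef prob = "{p :: real. 0 \<le> p \<and> p \<le> 1}"
  by (intro exI[of _ 0]) auto

datatype 'v expr = EVar 'v | EConst real | EAdd "'v expr" "'v expr" | EMul "'v expr" "'v expr"

datatype 'v cond = CTrue | CNot "'v cond" | CAnd "'v cond" "'v cond" | CLe "'v expr" "'v expr"

datatype ('v, 'f) stmt =
    Skip
  | Tick real
  | Assign 'v "'v expr"
  | Sample 'v dist
  | Call 'f
  | While "'v cond" "('v, 'f) stmt"
  | PIf prob "('v, 'f) stmt" "('v, 'f) stmt"
  | If "'v cond" "('v, 'f) stmt" "('v, 'f) stmt"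
  | Seq "('v, 'f) stmt" "('v, 'f) stmt"

datatype ('v, 'f) cont =
    Kstop
  | Kloop "'v cond" "('v, 'f) stmt" "('v, 'f) cont"
  | Kseq "('v, 'f) stmt" "('v, 'f) cont"

fun eval_expr :: "('v \<Rightarrow> real) \<Rightarrow> 'v expr \<Rightarrow> real" where
  "eval_expr \<gamma> (EVar x) = \<gamma> x"
| "eval_expr \<gamma> (EConst c) = c"
| "eval_expr \<gamma> (EAdd e1 e2) = eval_expr \<gamma> e1 + eval_expr \<gamma> e2"
| "eval_expr \<gamma> (EMul e1 e2) = eval_expr \<gamma> e1 * eval_expr \<gamma> e2"

fun eval_cond :: "('v \<Rightarrow> real) \<Rightarrow> 'v cond \<Rightarrow> bool" where
  "eval_cond \<gamma> CTrue = True"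
| "eval_cond \<gamma> (CNot L) = (\<not> eval_cond \<gamma> L)"
| "eval_cond \<gamma> (CAnd L1 L2) = (eval_cond \<gamma> L1 \<and> eval_cond \<gamma> L2)"
| "eval_cond \<gamma> (CLe e1 e2) = (eval_expr \<gamma> e1 \<le> eval_expr \<gamma> e2)"

type_synonym ('v, 'f) conf = "('v \<Rightarrow> real) \<times> ('v, 'f) stmt \<times> ('v, 'f) cont \<times> real"

definition conf_M :: "('v::finite, 'f) conf measure" where
  "conf_M = (PiM UNIV (\<lambda>_. borel)) \<Otimes>\<^sub>M (count_space UNIV \<Otimes>\<^sub>M (count_space UNIV \<Otimes>\<^sub>M borel))"

fun step :: "('f \<Rightarrow> ('v::finite, 'f) stmt) \<Rightarrow> ('v, 'f) conf \<Rightarrow> ('v, 'f) conf measure" where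
  "step Dm (\<gamma>, Skip, Kstop, \<alpha>) = return conf_M (\<gamma>, Skip, Kstop, \<alpha>)"
| "step Dm (\<gamma>, Skip, Kloop L S K, \<alpha>) =
     return conf_M (if eval_cond \<gamma> L then (\<gamma>, S, Kloop L S K, \<alpha>) else (\<gamma>, Skip, K, \<alpha>))"
| "step Dm (\<gamma>, Skip, Kseq S K, \<alpha>) = return conf_M (\<gamma>, S, K, \<alpha>)"
| "step Dm (\<gamma>, Tick c, K, \<alpha>) = return conf_M (\<gamma>, Skip, K, \<alpha> + c)"
| "step Dm (\<gamma>, Assign x e, K, \<alpha>) = return conf_M (\<gamma>(x := eval_expr \<gamma> e), Skip, K, \<alpha>)"
| "step Dm (\<gamma>, Sample x D, K, \<alpha>) = distr (Rep_dist D) conf_M (\<lambda>r. (\<gamma>(x := r), Skip, K, \<alpha>))"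
| "step Dm (\<gamma>, Call f, K, \<alpha>) = return conf_M (\<gamma>, Dm f, K, \<alpha>)"
| "step Dm (\<gamma>, PIf p S1 S2, K, \<alpha>) =
     distr (measure_pmf (bernoulli_pmf (Rep_prob p))) conf_M
       (\<lambda>b. if b then (\<gamma>, S1, K, \<alpha>) else (\<gamma>, S2, K, \<alpha>))"
| "step Dm (\<gamma>, If L S1 S2, K, \<alpha>) =
     return conf_M (if eval_cond \<gamma> L then (\<gamma>, S1, K, \<alpha>) else (\<gamma>, S2, K, \<alpha>))"
| "step Dm (\<gamma>, While L S, K, \<alpha>) = return conf_M (\<gamma>, Skip, Kloop L S K, \<alpha>)"
| "step Dm (\<gamma>, Seq S1 S2, K, \<alpha>) = return conf_M (\<gamma>, S1, Kseq S2 K, \<alpha>)"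

definition is_term :: "('v, 'f) conf \<Rightarrow> bool" where
  "is_term \<sigma> \<longleftrightarrow> fst (snd \<sigma>) = Skip \<and> fst (snd (snd \<sigma>)) = Kstop"

definition init_conf :: "('v, 'f) stmt \<Rightarrow> ('v, 'f) conf" where
  "init_conf Smain = ((\<lambda>_. 0), Smain, Kstop, 0)"

text \<open>Probability that the chain started at \<open>\<sigma>\<close> has \<open>\<omega>\<^sub>i \<in> As!i\<close> for all \<open>i < length As\<close>.\<close>
fun path_prob :: "('c \<Rightarrow> 'c measure) \<Rightarrow> 'c \<Rightarrow> 'c set list \<Rightarrow> ennreal" where
  "path_prob Kn \<sigma> [] = 1"
| "path_prob Kn \<sigma> (A # As) = indicator A \<sigma> * (\<integral>\<^sup>+ \<sigma>'. path_prob Kn \<sigma>' As \<partial>(Kn \<sigma>))"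

definition markov_law :: "'c measure \<Rightarrow> ('c \<Rightarrow> 'c measure) \<Rightarrow> 'c \<Rightarrow> 'c stream measure \<Rightarrow> bool" where
  "markov_law M Kn \<sigma>0 P \<longleftrightarrow>
     prob_space P \<and> sets P = sets (stream_space M) \<and>
     (\<forall>As. set As \<subseteq> sets M \<longrightarrow>
        emeasure P {\<omega> \<in> space (stream_space M). \<forall>i < length As. \<omega> !! i \<in> As ! i}
          = path_prob Kn \<sigma>0 As)"

definition stop_time :: "('v, 'f) conf stream \<Rightarrow> enat" where
  "stop_time \<omega> = (if \<exists>n. is_term (\<omega> !! n) then enat (LEAST n. is_term (\<omega> !! n)) else \<infinity>)"

text \<open>Vectors \<open>\<langle>u_k\<rangle>_{0\<le>k\<le>m}\<close> are represented as \<open>nat \<Rightarrow> ennreal\<close>; only indices \<open>k \<le> m\<close> matter.\<close>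
definition mom_mult :: "(nat \<Rightarrow> ennreal) \<Rightarrow> (nat \<Rightarrow> ennreal) \<Rightarrow> nat \<Rightarrow> ennreal" where
  "mom_mult u v = (\<lambda>k. \<Sum>i\<le>k. of_nat (k choose i) * u i * v (k - i))"

definition mom_one :: "nat \<Rightarrow> ennreal" where
  "mom_one = (\<lambda>k. if k = 0 then 1 else 0)"

definition mom_le :: "nat \<Rightarrow> (nat \<Rightarrow> ennreal) \<Rightarrow> (nat \<Rightarrow> ennreal) \<Rightarrow> bool" where
  "mom_le m u v \<longleftrightarrow> (\<forall>k\<le>m. u k \<le> v k)"

definition mom_expect :: "'c measure \<Rightarrow> ('c \<Rightarrow> nat \<Rightarrow> ennreal) \<Rightarrow> nat \<Rightarrow> ennreal" where
  "mom_expect M f = (\<lambda>k. \<integral>\<^sup>+ x. f x k \<partial>M)"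

definition epf_upper ::
  "('f \<Rightarrow> ('v::finite, 'f) stmt) \<Rightarrow> nat \<Rightarrow> (('v, 'f) conf \<Rightarrow> nat \<Rightarrow> ennreal) \<Rightarrow> bool" where
  "epf_upper Dm m \<psi> \<longleftrightarrow>
     (\<forall>k\<le>m. (\<lambda>\<sigma>. \<psi> \<sigma> k) \<in> borel_measurable conf_M) \<and>
     (\<forall>\<sigma>. \<psi> \<sigma> 0 = 1) \<and>
     (\<forall>\<sigma>. is_term \<sigma> \<longrightarrow> (\<forall>k\<le>m. \<psi> \<sigma> k = mom_one k)) \<and>
     (\<forall>\<sigma>. \<not> is_term \<sigma> \<longrightarrow>
        mom_le m (mom_expect (step Dm \<sigma>) (\<lambda>\<sigma>'. mom_mult (\<lambda>_. 1) (\<psi> \<sigma>'))) (\<psi> \<sigma>))"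

end

theory Submission
  imports Defs
begin

text \<open>
  Write \<open>q\<^sub>\<sigma>(r)\<close> for the probability that the chain started in \<open>\<sigma>\<close> has not terminated
  before step \<open>r\<close>, i.e. \<open>P(T \<ge> r)\<close>. The truncated moments \<open>E[min(T,n)\<^sup>k]\<close> are the finite
  sums \<open>0\<^sup>k + \<Sum>r<n. ((r+1)\<^sup>k - r\<^sup>k) q\<^sub>\<sigma>(r+1)\<close>. From a running configuration one step is
  taken, so \<open>min(T, n+1) = 1 + min(T', n)\<close> with \<open>T'\<close> the stopping time of the successor, and by
  the binomial theorem the moment vector at level \<open>n+1\<close> is \<open>\<langle>1,\<dots>,1\<rangle> \<otimes>\<close> the expected moment
  vector at level \<open>n\<close> of the successor. Induction on \<open>n\<close> with condition (iii) therefore bounds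
  every truncated moment by \<open>\<psi>(\<sigma>)\<close>; monotone convergence gives \<open>E[T\<^sup>k] \<le> \<psi>(\<sigma>\<^sub>0)\<^sub>k\<close>, and
  \<open>\<psi>(\<omega>\<^sub>0) = \<psi>(\<sigma>\<^sub>0)\<close> almost surely.
\<close>

text \<open>
  Nothing is known about measurability of the kernel in the start configuration, so functions
  such as \<open>\<sigma>' \<mapsto> q\<^sub>\<sigma>\<^sub>'(r)\<close> need not be measurable. The induction therefore only uses
  the following inequalities, which hold for arbitrary integrands.
\<close>

lemma nn_integral_add_le:
  "integral\<^sup>N M f + integral\<^sup>N M g \<le> (\<integral>\<^sup>+x. f x + g x \<partial>M)"
proof -
  have nonempty: "{s. simple_function M s \<and> s \<le> h} \<noteq> {}" for h :: "_ \<Rightarrow> ennreal"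
    by (auto intro!: exI[of _ "\<lambda>_. 0"] simp: le_fun_def)
  have "integral\<^sup>S M s + integral\<^sup>S M t \<le> (\<integral>\<^sup>+x. f x + g x \<partial>M)"
    if "simple_function M s" "s \<le> f" "simple_function M t" "t \<le> g" for s t
  proof -
    have "integral\<^sup>S M s + integral\<^sup>S M t = integral\<^sup>S M (\<lambda>x. s x + t x)"
      using that by (simp add: simple_integral_add)
    also have "\<dots> \<le> (\<integral>\<^sup>+x. f x + g x \<partial>M)"
      unfolding nn_integral_def using that
      by (intro SUP_upper) (auto simp: le_fun_def intro: add_mono)
    finally show ?thesis .
  qed
  then show ?thesis
    unfolding nn_integral_def[of M f] nn_integral_def[of M g]
    by (auto simp: ennreal_SUP_add_left[OF nonempty, symmetric]
                   ennreal_SUP_add_right[OF nonempty] intro!: SUP_least)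
qed

lemma nn_integral_cmult_le:
  "c * integral\<^sup>N M f \<le> (\<integral>\<^sup>+x. c * f x \<partial>M)"
  unfolding nn_integral_def SUP_mult_left_ennreal
proof (intro SUP_least, clarify)
  fix s assume s: "simple_function M s" "s \<le> f"
  then have "c * integral\<^sup>S M s = integral\<^sup>S M (\<lambda>x. c * s x)"
    by (simp add: simple_integral_mult)
  also have "\<dots> \<le> (SUP t\<in>{t. simple_function M t \<and> t \<le> (\<lambda>x. c * f x)}. integral\<^sup>S M t)"
    using s by (intro SUP_upper) (auto simp: le_fun_def intro: mult_left_mono)
  finally show "c * integral\<^sup>S M s \<le> \<dots>" .
qed

lemma nn_integral_sum_le:
  assumes "finite I"
  shows "(\<Sum>i\<in>I. integral\<^sup>N M (f i)) \<le> (\<integral>\<^sup>+x. (\<Sum>i\<in>I. f i x) \<partial>M)"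
  using assms
proof (induction I rule: finite_induct)
  case (insert a I)
  have "(\<Sum>i\<in>insert a I. integral\<^sup>N M (f i)) \<le> integral\<^sup>N M (f a) + (\<integral>\<^sup>+x. (\<Sum>i\<in>I. f i x) \<partial>M)"
    using insert by (simp add: add_left_mono)
  also have "\<dots> \<le> (\<integral>\<^sup>+x. (\<Sum>i\<in>insert a I. f i x) \<partial>M)"
    using insert nn_integral_add_le[of M "f a"] by simp
  finally show ?case .
qed simp

lemma ennreal_add_suminf_le:
  fixes c :: ennreal
  assumes "\<And>n. c + (\<Sum>r<n. f r) \<le> C"
  shows "c + suminf f \<le> C"
  unfolding suminf_eq_SUP by (simp add: ennreal_SUP_add_right assms SUP_least)

lemma mom_mult_mom_one_right: "mom_mult u mom_one k = u k"
proof -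
  have "mom_mult u mom_one k = (\<Sum>i\<le>k. if i = k then u k else 0)"
    unfolding mom_mult_def by (intro sum.cong) (auto simp: mom_one_def)
  then show ?thesis by simp
qed

lemma mom_mult_add_right:
  "mom_mult u (\<lambda>j. v j + w j) k = mom_mult u v k + mom_mult u w k"
  unfolding mom_mult_def by (simp add: distrib_left sum.distrib)

lemma mom_mult_mono_right:
  assumes "\<And>j. j \<le> k \<Longrightarrow> v j \<le> w j"
  shows "mom_mult u v k \<le> mom_mult u w k"
  unfolding mom_mult_def using assms by (intro sum_mono mult_left_mono) auto

lemma mom_mult_nn_integral_le:
  "mom_mult u (\<lambda>j. \<integral>\<^sup>+x. f x j \<partial>M) k \<le> (\<integral>\<^sup>+x. mom_mult u (f x) k \<partial>M)"
proof -
  have "mom_mult u (\<lambda>j. \<integral>\<^sup>+x. f x j \<partial>M) k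
      \<le> (\<Sum>i\<le>k. \<integral>\<^sup>+x. of_nat (k choose i) * u i * f x (k - i) \<partial>M)"
    unfolding mom_mult_def by (intro sum_mono nn_integral_cmult_le)
  also have "\<dots> \<le> (\<integral>\<^sup>+x. mom_mult u (f x) k \<partial>M)"
    unfolding mom_mult_def by (intro nn_integral_sum_le) simp
  finally show ?thesis .
qed

definition pow_diff :: "nat \<Rightarrow> nat \<Rightarrow> nat" where
  "pow_diff r k = Suc r ^ k - r ^ k"

lemma binomial_sum_pow_diff:
  "(\<Sum>i\<le>k. (k choose i) * pow_diff r (k - i)) = pow_diff (Suc r) k"
proof -
  have "(\<Sum>i\<le>k. (k choose i) * pow_diff r (k - i)) =
        (\<Sum>i\<le>k. (k choose i) * Suc r ^ (k - i)) - (\<Sum>i\<le>k. (k choose i) * r ^ (k - i))"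
    unfolding pow_diff_def diff_mult_distrib2
    by (intro sum_subtractf_nat) (auto intro!: mult_left_mono power_mono)
  also have "\<dots> = Suc (Suc r) ^ k - Suc r ^ k"
    using binomial_ring[of 1 "Suc r" k] binomial_ring[of 1 r k] by simp
  finally show ?thesis unfolding pow_diff_def .
qed

lemma mom_one_add_sum_pow_diff:
  "mom_one k + (\<Sum>r<t. of_nat (pow_diff r k)) = (of_nat t :: ennreal) ^ k"
proof (induction t)
  case 0
  show ?case by (simp add: mom_one_def)
next
  case (Suc t)
  have "t ^ k \<le> Suc t ^ k" by (intro power_mono) auto
  then have "(of_nat t :: ennreal) ^ k + of_nat (pow_diff t k) = of_nat (Suc t) ^ k"
    unfolding pow_diff_def by (metis le_add_diff_inverse of_nat_add of_nat_power)
  with Suc show ?case by (simp add: add.assoc[symmetric])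
qed

text \<open>If \<open>q r = P(T \<ge> r)\<close>, then \<open>trunc_moment q n k = E[min(T,n)\<^sup>k]\<close>; note \<open>mom_one k = 0\<^sup>k\<close>.\<close>
definition trunc_moment :: "(nat \<Rightarrow> ennreal) \<Rightarrow> nat \<Rightarrow> nat \<Rightarrow> ennreal" where
  "trunc_moment q n k = mom_one k + (\<Sum>r<n. of_nat (pow_diff r k) * q (Suc r))"

lemma trunc_moment_0 [simp]: "trunc_moment q 0 k = mom_one k"
  by (simp add: trunc_moment_def)

lemma trunc_moment_Suc:
  assumes "q (Suc 0) = 1"
  shows "trunc_moment q (Suc n) k = mom_mult (\<lambda>_. 1) (trunc_moment (\<lambda>r. q (Suc r)) n) k"
proof -
  have "mom_mult (\<lambda>_. 1) (trunc_moment (\<lambda>r. q (Suc r)) n) k =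
      mom_mult (\<lambda>_. 1) mom_one k +
      mom_mult (\<lambda>_. 1) (\<lambda>j. \<Sum>r<n. of_nat (pow_diff r j) * q (Suc (Suc r))) k"
    unfolding trunc_moment_def by (rule mom_mult_add_right)
  also have "mom_mult (\<lambda>_. 1) mom_one k = 1"
    by (simp add: mom_mult_mom_one_right)
  also have "mom_mult (\<lambda>_. 1) (\<lambda>j. \<Sum>r<n. of_nat (pow_diff r j) * q (Suc (Suc r))) k =
      (\<Sum>r<n. of_nat (pow_diff (Suc r) k) * q (Suc (Suc r)))"
    unfolding mom_mult_def binomial_sum_pow_diff[symmetric]
    by (simp add: sum_distrib_left sum_distrib_right mult.assoc sum.swap[of _ "{..k}"])
  also have "1 + (\<Sum>r<n. of_nat (pow_diff (Suc r) k) * q (Suc (Suc r))) = trunc_moment q (Suc n) k"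
    using mom_one_add_sum_pow_diff[of k 1] assms
    unfolding trunc_moment_def sum.lessThan_Suc_shift by (simp add: add.assoc[symmetric])
  finally show ?thesis by (rule sym)
qed

lemma trunc_moment_nn_integral_le:
  assumes "prob_space M"
  shows "trunc_moment (\<lambda>r. \<integral>\<^sup>+x. p x r \<partial>M) n k \<le> (\<integral>\<^sup>+x. trunc_moment (p x) n k \<partial>M)"
proof -
  have "trunc_moment (\<lambda>r. \<integral>\<^sup>+x. p x r \<partial>M) n k \<le>
      (\<integral>\<^sup>+x. mom_one k \<partial>M) + (\<Sum>r<n. \<integral>\<^sup>+x. of_nat (pow_diff r k) * p x (Suc r) \<partial>M)"
    unfolding trunc_moment_def using prob_space.emeasure_space_1[OF assms]
    by (auto intro!: add_mono sum_mono nn_integral_cmult_le)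
  also have "\<dots> \<le> (\<integral>\<^sup>+x. trunc_moment (p x) n k \<partial>M)"
    unfolding trunc_moment_def
    by (intro order_trans[OF add_left_mono nn_integral_add_le] nn_integral_sum_le) simp
  finally show ?thesis .
qed

lemma space_conf_M [simp]: "space conf_M = UNIV"
  by (auto simp: conf_M_def space_pair_measure space_PiM)

lemma singleton_sets_conf_M: "{\<sigma>} \<in> sets conf_M"
proof (cases \<sigma>)
  case (fields \<gamma> S K \<alpha>)
  then have "{\<sigma>} = PiE UNIV (\<lambda>v. {\<gamma> v}) \<times> ({S} \<times> ({K} \<times> {\<alpha>}))"
    by (auto simp: PiE_iff fun_eq_iff)
  also have "\<dots> \<in> sets conf_M"
    unfolding conf_M_def by (intro pair_measureI sets_PiM_I_finite) auto
  finally show ?thesis .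
qed

lemma prob_space_step: "prob_space (step Dm \<sigma>)"
proof (cases \<sigma>)
  case (fields \<gamma> S K \<alpha>)
  show ?thesis
  proof (cases S)
    case Skip
    with fields show ?thesis by (cases K) (auto intro: prob_space_return)
  next
    case (Sample x D)
    have D: "prob_space (Rep_dist D)" "sets (Rep_dist D) = sets borel"
      using Rep_dist[of D] by auto
    have "(\<lambda>r. (\<gamma>(x := r), Skip, K, \<alpha>)) \<in> measurable (Rep_dist D) conf_M"
      unfolding measurable_cong_sets[OF D(2) refl] conf_M_def
      by (intro measurable_Pair measurable_PiM_single' measurable_const) (auto simp: space_PiM)
    with fields Sample D show ?thesis by (auto intro!: prob_space.prob_space_distr)
  next
    case PIf
    with fields show ?thesis
      by (auto intro!: prob_space.prob_space_distr prob_space_measure_pmf)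
  qed (use fields in \<open>auto intro: prob_space_return\<close>)
qed

definition running_confs :: "('v, 'f) conf set" where
  "running_confs = {\<sigma>. \<not> is_term \<sigma>}"

lemma running_confs_sets: "running_confs \<in> sets conf_M"
proof -
  have "running_confs = space conf_M - space (PiM UNIV (\<lambda>_. borel)) \<times> ({Skip} \<times> ({Kstop} \<times> space borel))"
    by (auto simp: running_confs_def is_term_def space_PiM)
  also have "\<dots> \<in> sets conf_M"
    unfolding conf_M_def by (intro sets.compl_sets pair_measureI) auto
  finally show ?thesis .
qed

definition survival_prob :: "('f \<Rightarrow> ('v::finite, 'f) stmt) \<Rightarrow> ('v, 'f) conf \<Rightarrow> nat \<Rightarrow> ennreal" where
  "survival_prob Dm \<sigma> r = path_prob (step Dm) \<sigma> (replicate r running_confs)"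

lemma survival_prob_Suc:
  "survival_prob Dm \<sigma> (Suc r) = indicator running_confs \<sigma> * (\<integral>\<^sup>+\<sigma>'. survival_prob Dm \<sigma>' r \<partial>step Dm \<sigma>)"
  by (simp add: survival_prob_def)

lemma epf_upperD:
  assumes "epf_upper Dm m \<psi>"
  shows epf_upper_zero: "\<psi> \<sigma> 0 = 1"
    and epf_upper_term: "is_term \<sigma> \<Longrightarrow> k \<le> m \<Longrightarrow> \<psi> \<sigma> k = mom_one k"
    and epf_upper_step: "\<not> is_term \<sigma> \<Longrightarrow> k \<le> m \<Longrightarrow>
      (\<integral>\<^sup>+\<sigma>'. mom_mult (\<lambda>_. 1) (\<psi> \<sigma>') k \<partial>step Dm \<sigma>) \<le> \<psi> \<sigma> k"
  using assms unfolding epf_upper_def mom_le_def mom_expect_def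
  by (simp_all del: split_paired_All)

lemma trunc_moment_survival_le:
  assumes epf: "epf_upper Dm m \<psi>" and "k \<le> m"
  shows "trunc_moment (survival_prob Dm \<sigma>) n k \<le> \<psi> \<sigma> k"
  using assms(2)
proof (induction n arbitrary: \<sigma> k)
  case 0
  then show ?case using epf_upper_zero[OF epf] by (simp add: mom_one_def)
next
  case (Suc n)
  show ?case
  proof (cases "is_term \<sigma>")
    case True
    then have "trunc_moment (survival_prob Dm \<sigma>) (Suc n) k = mom_one k"
      by (simp add: trunc_moment_def survival_prob_Suc running_confs_def)
    also have "\<dots> = \<psi> \<sigma> k"
      using True Suc.prems by (simp add: epf_upper_term[OF epf])
    finally show ?thesis by simp
  next
    case False
    let ?M = "step Dm \<sigma>"
    have survival: "survival_prob Dm \<sigma> (Suc r) = (\<integral>\<^sup>+\<sigma>'. survival_prob Dm \<sigma>' r \<partial>?M)" for r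
      using False by (simp add: survival_prob_Suc running_confs_def)
    have "survival_prob Dm \<sigma> (Suc 0) = 1"
      using False prob_space.emeasure_space_1[OF prob_space_step]
      by (simp add: survival_prob_def running_confs_def)
    then have "trunc_moment (survival_prob Dm \<sigma>) (Suc n) k =
        mom_mult (\<lambda>_. 1) (trunc_moment (\<lambda>r. \<integral>\<^sup>+\<sigma>'. survival_prob Dm \<sigma>' r \<partial>?M) n) k"
      by (simp add: trunc_moment_Suc survival)
    also have "\<dots> \<le> mom_mult (\<lambda>_. 1) (\<lambda>j. \<integral>\<^sup>+\<sigma>'. trunc_moment (survival_prob Dm \<sigma>') n j \<partial>?M) k"
      by (intro mom_mult_mono_right trunc_moment_nn_integral_le prob_space_step)
    also have "\<dots> \<le> (\<integral>\<^sup>+\<sigma>'. mom_mult (\<lambda>_. 1) (trunc_moment (survival_prob Dm \<sigma>') n) k \<partial>?M)"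
      by (rule mom_mult_nn_integral_le)
    also have "\<dots> \<le> (\<integral>\<^sup>+\<sigma>'. mom_mult (\<lambda>_. 1) (\<psi> \<sigma>') k \<partial>?M)"
      using Suc.IH Suc.prems by (intro nn_integral_mono mom_mult_mono_right) auto
    also have "\<dots> \<le> \<psi> \<sigma> k"
      using False Suc.prems by (rule epf_upper_step[OF epf])
    finally show ?thesis .
  qed
qed

lemma markov_law_cylinder:
  assumes law: "markov_law M Kn \<sigma>0 P" and As: "set As \<subseteq> sets M"
  shows markov_law_cylinder_sets: "{\<omega> \<in> space P. \<forall>i<length As. \<omega> !! i \<in> As ! i} \<in> sets P"
    and markov_law_cylinder_emeasure:
      "emeasure P {\<omega> \<in> space P. \<forall>i<length As. \<omega> !! i \<in> As ! i} = path_prob Kn \<sigma>0 As"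
proof -
  let ?S = "stream_space M"
  have sets_P: "sets P = sets ?S" using law by (simp add: markov_law_def)
  note space_P = sets_eq_imp_space_eq[OF sets_P]
  have "{\<omega> \<in> space P. \<forall>i<length As. \<omega> !! i \<in> As ! i} =
      space ?S - (\<Union>i<length As. space ?S - (\<lambda>\<omega>. \<omega> !! i) -` (As ! i) \<inter> space ?S)"
    unfolding space_P by auto
  also have "\<dots> \<in> sets ?S"
    using As by (intro sets.Diff sets.top sets.finite_UN)
      (auto intro!: measurable_sets[OF measurable_snth])
  finally show "{\<omega> \<in> space P. \<forall>i<length As. \<omega> !! i \<in> As ! i} \<in> sets P"
    unfolding sets_P .
  show "emeasure P {\<omega> \<in> space P. \<forall>i<length As. \<omega> !! i \<in> As ! i} = path_prob Kn \<sigma>0 As"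
    using law As unfolding markov_law_def space_P by blast
qed

lemma markov_law_AE_shd:
  assumes law: "markov_law M Kn \<sigma>0 P" and "{\<sigma>0} \<in> sets M" "prob_space (Kn \<sigma>0)"
  shows "AE \<omega> in P. shd \<omega> = \<sigma>0"
proof -
  interpret P: prob_space P using law by (simp add: markov_law_def)
  let ?B = "{\<omega> \<in> space P. shd \<omega> = \<sigma>0}"
  have "emeasure P ?B = path_prob Kn \<sigma>0 [{\<sigma>0}]"
    using markov_law_cylinder_emeasure[OF law, of "[{\<sigma>0}]"] assms(2) by simp
  also have "\<dots> = 1"
    using prob_space.emeasure_space_1[OF assms(3)] by simp
  finally have "AE \<omega> in P. \<omega> \<in> ?B"
    by (intro P.AE_prob_1) (simp add: P.emeasure_eq_measure)
  then show ?thesis by (rule AE_mp) auto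
qed

lemma stop_time_ge_iff:
  "enat r \<le> stop_time \<omega> \<longleftrightarrow> (\<forall>i<r. \<not> is_term (\<omega> !! i))"
proof (cases "\<exists>n. is_term (\<omega> !! n)")
  case True
  let ?t = "LEAST n. is_term (\<omega> !! n)"
  have "stop_time \<omega> = enat ?t" using True by (simp add: stop_time_def)
  moreover have "is_term (\<omega> !! ?t)" using True by (rule LeastI_ex)
  moreover have "i < ?t \<Longrightarrow> \<not> is_term (\<omega> !! i)" for i by (rule not_less_Least)
  ultimately show ?thesis by (auto simp: not_le) (meson not_le)
next
  case False
  then show ?thesis by (simp add: stop_time_def)
qed

lemma ennreal_of_enat_power_le_tail_sum:
  "ennreal_of_enat t ^ k \<le>
     mom_one k + (\<Sum>r. of_nat (pow_diff r k) * of_bool (enat (Suc r) \<le> t))"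
proof -
  define f :: "nat \<Rightarrow> ennreal" where "f = (\<lambda>r. of_nat (pow_diff r k) * of_bool (enat (Suc r) \<le> t))"
  have below: "of_nat N ^ k \<le> mom_one k + suminf f" if "enat N \<le> t" for N
  proof -
    have "enat (Suc r) \<le> t" if "r < N" for r
      using that \<open>enat N \<le> t\<close> by (metis Suc_leI enat_ord_simps(1) order_trans)
    then have "(of_nat N :: ennreal) ^ k = mom_one k + (\<Sum>r<N. f r)"
      by (auto simp: f_def mom_one_add_sum_pow_diff[symmetric] intro!: sum.cong)
    also have "\<dots> \<le> mom_one k + suminf f"
      by (intro add_left_mono sum_le_suminf) auto
    finally show ?thesis .
  qed
  have "ennreal_of_enat t ^ k \<le> mom_one k + suminf f"
  proof (cases t)
    case (enat N)
    then show ?thesis using below[of N] by simp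
  next
    case infinity
    show ?thesis
    proof (cases "k = 0")
      case True
      then show ?thesis by (simp add: mom_one_def)
    next
      case False
      have "(SUP N. of_nat N :: ennreal) \<le> mom_one k + suminf f"
      proof (rule SUP_least)
        fix N :: nat
        have "N \<le> N ^ k" using False by (cases N) (auto intro: self_le_power)
        then have "of_nat N \<le> (of_nat N :: ennreal) ^ k" by (metis of_nat_le_iff of_nat_power)
        also have "\<dots> \<le> mom_one k + suminf f" using below infinity by simp
        finally show "of_nat N \<le> mom_one k + suminf f" .
      qed
      then show ?thesis using infinity False by (simp add: ennreal_SUP_of_nat_eq_top top_unique)
    qed
  qed
  then show ?thesis unfolding f_def .
qed

lemma nn_integral_power_stop_time_le:
  fixes Dm :: "'f \<Rightarrow> ('v::finite, 'f) stmt"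
  assumes law: "markov_law conf_M (step Dm) \<sigma>0 P"
  shows "(\<integral>\<^sup>+\<omega>. ennreal_of_enat (stop_time \<omega>) ^ k \<partial>P) \<le>
    mom_one k + (\<Sum>r. of_nat (pow_diff r k) * survival_prob Dm \<sigma>0 (Suc r))"
proof -
  interpret P: prob_space P using law by (simp add: markov_law_def)
  define survives where "survives r = {\<omega> \<in> space P. enat r \<le> stop_time \<omega>}" for r
  define runs where "runs r = replicate r (running_confs :: ('v, 'f) conf set)" for r
  have cylinder: "survives r = {\<omega> \<in> space P. \<forall>i<length (runs r). \<omega> !! i \<in> runs r ! i}" for r
    by (auto simp: survives_def runs_def stop_time_ge_iff running_confs_def)
  have running: "set (runs r) \<subseteq> sets conf_M" for r
    using running_confs_sets by (auto simp: runs_def)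
  have survives_sets: "survives r \<in> sets P" for r
    unfolding cylinder using law running by (rule markov_law_cylinder_sets)
  have survives_emeasure: "emeasure P (survives r) = survival_prob Dm \<sigma>0 r" for r
    unfolding cylinder survival_prob_def runs_def[symmetric]
    using law running by (rule markov_law_cylinder_emeasure)
  have "(\<integral>\<^sup>+\<omega>. ennreal_of_enat (stop_time \<omega>) ^ k \<partial>P) \<le>
      (\<integral>\<^sup>+\<omega>. mom_one k + (\<Sum>r. of_nat (pow_diff r k) * indicator (survives (Suc r)) \<omega>) \<partial>P)"
    using ennreal_of_enat_power_le_tail_sum
    by (intro nn_integral_mono) (simp add: indicator_def survives_def)
  also have "\<dots> = mom_one k + (\<Sum>r. of_nat (pow_diff r k) * survival_prob Dm \<sigma>0 (Suc r))"
    using survives_sets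
    by (simp add: nn_integral_add nn_integral_suminf nn_integral_cmult_indicator survives_emeasure
                  P.emeasure_space_1)
  finally show ?thesis .
qed

theorem theoremG2:
  fixes Dm :: "'f::finite \<Rightarrow> ('v::finite, 'f) stmt"
    and Smain :: "('v, 'f) stmt"
    and m :: nat
    and \<psi> :: "('v, 'f) conf \<Rightarrow> nat \<Rightarrow> ennreal"
    and P :: "('v, 'f) conf stream measure"
  assumes "epf_upper Dm m \<psi>"
    and "markov_law conf_M (step Dm) (init_conf Smain) P"
  shows "mom_le m
           (\<lambda>k. \<integral>\<^sup>+ \<omega>. (ennreal_of_enat (stop_time \<omega>)) ^ k \<partial>P)
           (\<lambda>k. \<integral>\<^sup>+ \<omega>. \<psi> (shd \<omega>) k \<partial>P)"
proof -
  let ?\<sigma>0 = "init_conf Smain"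
  interpret P: prob_space P using assms(2) by (simp add: markov_law_def)
  have "AE \<omega> in P. shd \<omega> = ?\<sigma>0"
    using assms(2) singleton_sets_conf_M prob_space_step by (rule markov_law_AE_shd)
  then have "(\<integral>\<^sup>+\<omega>. \<psi> (shd \<omega>) k \<partial>P) = (\<integral>\<^sup>+\<omega>. \<psi> ?\<sigma>0 k \<partial>P)" for k
    by (intro nn_integral_cong_AE) auto
  then have initial: "(\<integral>\<^sup>+\<omega>. \<psi> (shd \<omega>) k \<partial>P) = \<psi> ?\<sigma>0 k" for k
    by (simp add: P.emeasure_space_1)
  have "(\<integral>\<^sup>+\<omega>. ennreal_of_enat (stop_time \<omega>) ^ k \<partial>P) \<le> \<psi> ?\<sigma>0 k" if "k \<le> m" for k
    using nn_integral_power_stop_time_le[OF assms(2)]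
  proof (rule order_trans)
    show "mom_one k + (\<Sum>r. of_nat (pow_diff r k) * survival_prob Dm ?\<sigma>0 (Suc r)) \<le> \<psi> ?\<sigma>0 k"
      using trunc_moment_survival_le[OF assms(1) that]
      by (intro ennreal_add_suminf_le) (simp add: trunc_moment_def)
  qed
  then show ?thesis unfolding mom_le_def initial by blast
qed

end
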